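(* Let $\bm{X},\bm{Y}\in\mathbb{R}^{n\times r}$ be a critical point of $h(\bm{X},\bm{Y})=\frac12\sum_{(i,j)\in\Omega}[(\bm{X}\bm{Y}^\top)_{ij}-M_{ij}]^2+\frac{\lambda}{2}\|\bm{X}\|_{\mathrm{F}}^2+\frac{\lambda}{2}\|\bm{Y}\|_{\mathrm{F}}^2$ with $\mathrm{rank}(\bm{X})=\mathrm{rank}(\bm{Y})=r$. Let $T$ be the tangent space of $\bm{X}\bm{Y}^\top$ and suppose $\mathcal{P}_\Omega$ is injective on $T$, i.e. for $\bm{H}\in T$, $\mathcal{P}_\Omega(\bm{H})=\bm{0}$ implies $\bm{H}=\bm{0}$. Suppose furthermore that (a) $\|\mathcal{P}_\Omega(\bm{E})\|<\lambda/8$ and (b) $\|\mathcal{P}_\Omega(\bm{X}\bm{Y}^\top-\bm{M}^\star)-p(\bm{X}\bm{Y}^\top-\bm{M}^\star)\|<\lambda/8$. Then $\bm{Z}=\bm{X}\bm{Y}^\top$ is the unique minimizer of $g(\bm{Z})=\frac12\sum_{(i,j)\in\Omega}(Z_{ij}-M_{ij})^2+\lambda\|\bm{Z}\|_*$.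
   Context: $\bm{M}^\star\in\mathbb{R}^{n\times n}$ has rank $r$; $\bm{E}\in\mathbb{R}^{n\times n}$ is a noise matrix, $\bm{M}=\bm{M}^\star+\bm{E}$, $\Omega\subseteq[n]\times[n]$, $p\in(0,1]$, $\lambda>0$. $\mathcal{P}_\Omega(\bm{Z})$ keeps the entries of $\bm{Z}$ in $\Omega$ and zeros the others. For a rank-$r$ matrix with compact SVD $\bm{U}\bm{\Sigma}\bm{V}^\top$ ($\bm{U},\bm{V}\in\mathbb{R}^{n\times r}$), its tangent space is $T=\{\bm{U}\bm{A}^\top+\bm{B}\bm{V}^\top:\bm{A},\bm{B}\in\mathbb{R}^{n\times r}\}$. $\|\cdot\|$ is the spectral norm. The statement is deterministic. *)

theory Defs
  imports "HOL-Analysis.Analysis"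
begin

definition spec_norm :: "real^'m^'k \<Rightarrow> real" where
  "spec_norm A = onorm (\<lambda>x. A *v x)"

definition nuc_norm :: "real^'m^'k \<Rightarrow> real" where
  "nuc_norm A = Sup {trace (transpose A ** B) | B :: real^'m^'k. spec_norm B \<le> 1}"

definition frob_sq :: "real^'m^'k \<Rightarrow> real" where
  "frob_sq A = (\<Sum>i\<in>UNIV. \<Sum>j\<in>UNIV. (A $ i $ j)^2)"

definition P_Omega :: "('k \<times> 'm) set \<Rightarrow> real^'m^'k \<Rightarrow> real^'m^'k" where
  "P_Omega \<Omega> Z = (\<chi> i j. if (i, j) \<in> \<Omega> then Z $ i $ j else 0)"

text \<open>Tangent space of a rank-r matrix Z (r = CARD('r)), defined through a compact SVD
  Z = U \<Sigma> V^T with U, V having orthonormal columns and \<Sigma> diagonal with positive entries.\<close>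
definition tangent_space :: "'r::finite itself \<Rightarrow> real^'n^'n \<Rightarrow> (real^'n^'n) set" where
  "tangent_space _ Z = {H. \<exists>(U::real^'r^'n) (V::real^'r^'n) (\<Sigma>::real^'r::finite^'r) A B.
      transpose U ** U = mat 1 \<and> transpose V ** V = mat 1 \<and>
      (\<forall>i j. i \<noteq> j \<longrightarrow> \<Sigma> $ i $ j = 0) \<and> (\<forall>i. \<Sigma> $ i $ i > 0) \<and>
      Z = U ** \<Sigma> ** transpose V \<and>
      H = U ** transpose A + B ** transpose V}"

definition h_obj :: "('n \<times> 'n) set \<Rightarrow> real^'n^'n \<Rightarrow> real \<Rightarrow> (real^'r^'n) \<times> (real^'r^'n) \<Rightarrow> real" where
  "h_obj \<Omega> M lam XY = (let X = fst XY; Y = snd XY in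
     (1/2) * (\<Sum>(i,j)\<in>\<Omega>. ((X ** transpose Y) $ i $ j - M $ i $ j)^2)
     + (lam/2) * frob_sq X + (lam/2) * frob_sq Y)"

definition g_obj :: "('n \<times> 'n) set \<Rightarrow> real^'n^'n \<Rightarrow> real \<Rightarrow> real^'n^'n \<Rightarrow> real" where
  "g_obj \<Omega> M lam Z = (1/2) * (\<Sum>(i,j)\<in>\<Omega>. (Z $ i $ j - M $ i $ j)^2) + lam * nuc_norm Z"

end

theory Submission
  imports Defs
begin

text \<open>At a critical point, the gradient \<open>G = P\<^sub>\<Omega>(X Y\<^sup>T - M)\<close> of the data term satisfies
  \<open>G Y = -lam X\<close> and \<open>G\<^sup>T X = -lam Y\<close>. Hence \<open>X\<^sup>T X = Y\<^sup>T Y\<close>, and diagonalising this common Gram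
  matrix gives a compact SVD \<open>X Y\<^sup>T = U \<Sigma> V\<^sup>T\<close> with \<open>G V = -lam U\<close> and \<open>G\<^sup>T U = -lam V\<close>, i.e.
  \<open>-G/lam = U V\<^sup>T + W\<close> with \<open>W\<close> vanishing on \<open>range V\<close>. By (a) and (b),
  \<open>p Mstar = p X Y\<^sup>T - G - Q\<close> with \<open>\<parallel>Q\<parallel> < lam/4\<close>; since \<open>Mstar\<close> has rank \<open>r\<close>, a dimension count
  shows \<open>\<parallel>W\<parallel> \<le> 1/4\<close>. Adding \<open>3/4\<close> of the normalised projection of \<open>Z - X Y\<^sup>T\<close> onto the
  orthogonal complement of the tangent space \<open>T\<close> yields a subgradient of the nuclear norm at
  \<open>X Y\<^sup>T\<close>, so that \<open>g Z - g (X Y\<^sup>T)\<close> is at least \<open>\<parallel>P\<^sub>\<Omega>(H)\<parallel>\<^sup>2/2 + 3 lam/4 \<parallel>P\<^sub>T\<^sub>\<bottom>(H)\<parallel>\<close>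
  for \<open>H = Z - X Y\<^sup>T\<close>. This is positive for \<open>H \<noteq> 0\<close>, because \<open>P\<^sub>\<Omega>\<close> is injective on \<open>T\<close>.\<close>

section \<open>Matrix algebra\<close>

declare transpose_matrix_vector [simp del]

lemma matrix_add_rdistrib: "((A::real^'m^'k) + B) ** C = A ** C + B ** C"
  by (simp add: matrix_matrix_mult_def vec_eq_iff sum.distrib algebra_simps)

lemma matrix_diff_ldistrib: "(A::real^'m^'k) ** (B - C) = A ** B - A ** C"
  by (simp add: matrix_matrix_mult_def vec_eq_iff sum_subtractf algebra_simps)

lemma matrix_diff_rdistrib: "((A::real^'m^'k) - B) ** C = A ** C - B ** C"
  by (simp add: matrix_matrix_mult_def vec_eq_iff sum_subtractf algebra_simps)

lemma matrix_scaleR_left: "(c *\<^sub>R (A::real^'m^'k)) ** B = c *\<^sub>R (A ** B)"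
  by (simp add: scalar_matrix_assoc)

lemma matrix_scaleR_right: "(A::real^'m^'k) ** (c *\<^sub>R B) = c *\<^sub>R (A ** B)"
  by (simp add: matrix_scalar_ac scalar_matrix_assoc)

lemma matrix_mult_minus_left: "(- (A::real^'m^'k)) ** B = - (A ** B)"
  by (simp add: matrix_matrix_mult_def vec_eq_iff sum_negf)

lemma matrix_mult_minus_right: "(A::real^'m^'k) ** (- B) = - (A ** B)"
  by (simp add: matrix_matrix_mult_def vec_eq_iff sum_negf)

lemma matrix_vector_mult_minus_left: "(- (A::real^'m^'k)) *v x = - (A *v x)"
  by (simp add: matrix_vector_mult_def vec_eq_iff sum_negf)

lemma transpose_add: "transpose ((A::real^'m^'k) + B) = transpose A + transpose B"
  by (simp add: transpose_def vec_eq_iff)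

lemma transpose_zero [simp]: "transpose (0::real^'m^'k) = 0"
  by (simp add: transpose_def vec_eq_iff)

lemma transpose_uminus: "transpose (- (A::real^'m^'k)) = - transpose A"
  by (simp add: transpose_def vec_eq_iff)

lemma transpose_diff: "transpose ((A::real^'m^'k) - B) = transpose A - transpose B"
  by (simp add: transpose_def vec_eq_iff)

lemma transpose_mult_flip:
  assumes "transpose A ** B = c *\<^sub>R (C::real^'m^'k)"
  shows "transpose B ** A = c *\<^sub>R transpose C"
proof -
  have "transpose B ** A = transpose (transpose A ** B)"
    by (simp add: matrix_transpose_mul)
  then show ?thesis
    by (simp add: assms transpose_scalar)
qed

lemmas matrix_algebra_simps = matrix_add_ldistrib matrix_add_rdistrib matrix_diff_ldistrib
  matrix_diff_rdistrib matrix_scaleR_left matrix_scaleR_right matrix_mult_minus_left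
  matrix_mult_minus_right transpose_add transpose_uminus transpose_diff
  transpose_zero transpose_scalar matrix_transpose_mul

lemma inner_matrix_eq_sum: "(A::real^'m^'k) \<bullet> B = (\<Sum>i\<in>UNIV. \<Sum>j\<in>UNIV. A$i$j * B$i$j)"
  by (simp add: inner_vec_def)

lemma inner_transpose: "transpose (A::real^'m^'k) \<bullet> transpose B = A \<bullet> B"
  by (simp add: inner_matrix_eq_sum transpose_def) (rule sum.swap)

lemma norm_transpose: "norm (transpose (A::real^'m^'k)) = norm A"
  by (simp add: norm_eq_sqrt_inner inner_transpose)

lemma inner_matrix_mult_right: "((A::real^'m^'k) ** B) \<bullet> C = A \<bullet> (C ** transpose B)"
  by (simp add: inner_matrix_eq_sum matrix_matrix_mult_def transpose_def sum_distrib_left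
      sum_distrib_right mult_ac) (subst sum.swap, rule refl)

lemma inner_matrix_mult_left: "((A::real^'m^'k) ** B) \<bullet> C = B \<bullet> (transpose A ** C)"
proof -
  have "(A ** B) \<bullet> C = (transpose B ** transpose A) \<bullet> transpose C"
    by (metis inner_transpose matrix_transpose_mul)
  also have "\<dots> = transpose B \<bullet> transpose (transpose A ** C)"
    by (simp add: inner_matrix_mult_right matrix_transpose_mul)
  finally show ?thesis
    by (simp only: inner_transpose)
qed

lemma inner_transpose_matrix_vector: "x \<bullet> (transpose (A::real^'m^'n) *v y) = (A *v x) \<bullet> y"
  by (metis dot_lmul_matrix inner_commute transpose_matrix_vector)

lemma trace_transpose_mult: "trace (transpose A ** B) = (A::real^'m^'n) \<bullet> B"
  by (simp add: trace_def matrix_matrix_mult_def transpose_def inner_vec_def) (rule sum.swap)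

lemma norm_matrix_sq: "norm (A::real^'m^'n) ^ 2 = (\<Sum>i\<in>UNIV. norm (A$i) ^ 2)"
  by (simp add: power2_norm_eq_inner inner_vec_def)

lemma norm_matrix_vector_mult_le: "norm ((A::real^'m^'n) *v x) \<le> norm A * norm x"
proof -
  have "norm (A *v x) ^ 2 = (\<Sum>i\<in>UNIV. ((A *v x) $ i) ^ 2)"
    unfolding power2_norm_eq_inner by (simp add: inner_vec_def power2_eq_square)
  also have "\<dots> = (\<Sum>i\<in>UNIV. ((A $ i) \<bullet> x) ^ 2)"
    by (simp only: matrix_vector_mul_component)
  also have "\<dots> \<le> (\<Sum>i\<in>UNIV. (norm (A $ i) * norm x) ^ 2)"
  proof (rule sum_mono)
    fix i
    have "\<bar>A $ i \<bullet> x\<bar> \<le> norm (A $ i) * norm x"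
      by (rule Cauchy_Schwarz_ineq2)
    then show "(A $ i \<bullet> x) ^ 2 \<le> (norm (A $ i) * norm x) ^ 2"
      by (metis abs_ge_zero power2_abs power_mono)
  qed
  also have "\<dots> = (norm A * norm x) ^ 2"
    by (simp add: norm_matrix_sq power_mult_distrib sum_distrib_right)
  finally show ?thesis
    by (rule power2_le_imp_le) simp
qed

lemma norm_orthonormal_columns:
  assumes "transpose U ** U = mat 1"
  shows "norm ((U::real^'r^'n) *v w) = norm w"
proof -
  have "(U *v w) \<bullet> (U *v w) = w \<bullet> w"
    using assms by (simp flip: inner_transpose_matrix_vector add: matrix_vector_mul_assoc)
  then show ?thesis by (simp add: norm_eq_sqrt_inner)
qed

section \<open>Diagonal matrices and the spectral theorem\<close>

definition diag_mat :: "('r::finite \<Rightarrow> real) \<Rightarrow> real^'r^'r" where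
  "diag_mat d = (\<chi> i j. if i = j then d i else 0)"

lemma diag_mat_mult_vector_component: "(diag_mat d *v c) $ k = d k * c $ k"
  by (simp add: diag_mat_def matrix_vector_mult_def if_distrib if_distribR cong: if_cong)

lemma diag_mat_mult: "diag_mat a ** diag_mat b = diag_mat (\<lambda>i. a i * b i)"
  by (simp add: matrix_eq vec_eq_iff diag_mat_mult_vector_component flip: matrix_vector_mul_assoc)

lemma diag_mat_1: "diag_mat (\<lambda>_. 1) = mat 1"
  by (simp add: diag_mat_def mat_def)

lemma transpose_diag_mat: "transpose (diag_mat d) = diag_mat d"
  by (simp add: diag_mat_def transpose_def vec_eq_iff)

lemma diag_mat_scaleR: "diag_mat (\<lambda>k. c * \<sigma> k) = c *\<^sub>R diag_mat \<sigma>"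
  by (simp add: diag_mat_def vec_eq_iff)

lemma linear_coeff_eq_0_if_quadratic_nonpos:
  fixes b c :: real
  assumes "\<And>t. b * t + c * t^2 \<le> 0"
  shows "b = 0"
proof -
  define e where "e = \<bar>c\<bar> + 1"
  have e: "e > 0" "e + c \<ge> 1"
    unfolding e_def by auto
  have "e^2 * (b * (b / e) + c * (b / e)^2) = b^2 * (e + c)"
    using e by (simp add: field_simps power2_eq_square)
  moreover have "e^2 * (b * (b / e) + c * (b / e)^2) \<le> 0"
    using assms[of "b / e"] by (simp add: mult_nonneg_nonpos)
  ultimately have "b^2 * (e + c) \<le> 0"
    by simp
  then have "b^2 \<le> 0"
    using e by (auto simp: mult_le_0_iff)
  then show ?thesis
    by simp
qed

lemma eigenvector_if_rayleigh_max:
  fixes A :: "real^'n^'n"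
  assumes sym: "transpose A = A" and S: "subspace S" and inv: "\<forall>x\<in>S. A *v x \<in> S"
    and xS: "x \<in> S" and max: "\<forall>z\<in>S. z \<bullet> (A *v z) \<le> (x \<bullet> (A *v x)) * (z \<bullet> z)"
    and xx: "x \<bullet> x = 1"
  shows "A *v x = (x \<bullet> (A *v x)) *\<^sub>R x"
proof -
  define \<mu> where "\<mu> = x \<bullet> (A *v x)"
  have "z \<bullet> (A *v x - \<mu> *\<^sub>R x) = 0" if "z \<in> S" for z
  proof -
    have "(A *v x) \<bullet> z = x \<bullet> (A *v z)"
      using inner_transpose_matrix_vector[of x A z] sym by simp
    moreover have "x + t *\<^sub>R z \<in> S" for t
      using S xS that by (simp add: subspace_add subspace_scale)
    ultimately have "2 * (z \<bullet> (A *v x) - \<mu> * (z \<bullet> x)) * t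
        + (z \<bullet> (A *v z) - \<mu> * (z \<bullet> z)) * t^2 \<le> 0" for t
      using max[rule_format, of "x + t *\<^sub>R z"] xx
      by (simp add: algebra_simps power2_eq_square \<mu>_def inner_commute)
    then have "2 * (z \<bullet> (A *v x) - \<mu> * (z \<bullet> x)) = 0"
      by (rule linear_coeff_eq_0_if_quadratic_nonpos)
    then show ?thesis
      by (simp add: inner_diff_right)
  qed
  moreover have "A *v x - \<mu> *\<^sub>R x \<in> S"
    using inv xS S by (simp add: subspace_diff subspace_scale)
  ultimately show ?thesis
    unfolding \<mu>_def by (metis inner_eq_zero_iff eq_iff_diff_eq_0)
qed

lemma symmetric_matrix_eigenvector_in_invariant_subspace:
  fixes A :: "real^'n^'n"
  assumes sym: "transpose A = A" and S: "subspace S" and inv: "\<forall>x\<in>S. A *v x \<in> S"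
    and ne: "S \<noteq> {0}"
  shows "\<exists>x\<in>S. norm x = 1 \<and> (\<exists>\<mu>. A *v x = \<mu> *\<^sub>R x)"
proof -
  define K where "K = S \<inter> sphere 0 1"
  have "compact K"
    unfolding K_def using S closed_subspace compact_sphere closed_Int_compact by blast
  have scale: "z /\<^sub>R norm z \<in> K" if "z \<in> S" "z \<noteq> 0" for z
    unfolding K_def using S subspace_scale that by auto
  obtain y where "y \<in> S" "y \<noteq> 0"
    using ne S subspace_0 by blast
  then have "K \<noteq> {}"
    using scale by blast
  have "continuous_on K (\<lambda>y. y \<bullet> (A *v y))"
    by (intro continuous_intros linear_continuous_on) auto
  then obtain x where x: "x \<in> K" and xmax: "\<forall>z\<in>K. z \<bullet> (A *v z) \<le> x \<bullet> (A *v x)"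
    using continuous_attains_sup[OF \<open>compact K\<close> \<open>K \<noteq> {}\<close>] by blast
  have xS: "x \<in> S" and xx: "x \<bullet> x = 1"
    using x unfolding K_def by (auto simp: norm_eq_1)
  have "z \<bullet> (A *v z) \<le> (x \<bullet> (A *v x)) * (z \<bullet> z)" if "z \<in> S" for z
  proof (cases "z = 0")
    case False
    then have "(z /\<^sub>R norm z) \<bullet> (A *v (z /\<^sub>R norm z)) \<le> x \<bullet> (A *v x)"
      using xmax scale[OF that] by auto
    then have "(z \<bullet> (A *v z)) / (norm z)^2 \<le> x \<bullet> (A *v x)"
      by (simp add: matrix_vector_mult_scaleR power2_eq_square divide_inverse mult_ac)
    then show ?thesis
      using False by (simp add: divide_le_eq power2_norm_eq_inner)
  qed simp
  then have "A *v x = (x \<bullet> (A *v x)) *\<^sub>R x"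
    using eigenvector_if_rayleigh_max[OF sym S inv xS _ xx] by blast
  then show ?thesis
    using xS xx by (auto simp: norm_eq_1)
qed

lemma dim_orthogonal_complement_of_unit_vector:
  fixes x :: "'a::euclidean_space"
  assumes S: "subspace S" and xS: "x \<in> S" and nx: "norm x = 1"
  defines "S' \<equiv> {y \<in> S. x \<bullet> y = 0}"
  shows "dim S = dim S' + 1" and "x \<notin> span S'"
proof -
  have "subspace S'"
    using S unfolding S'_def subspace_def by (auto simp: inner_add_right)
  then have "span S' = S'"
    by (simp add: span_eq_iff)
  moreover have "x \<notin> S'"
    using nx by (auto simp: S'_def)
  ultimately show xS': "x \<notin> span S'"
    by blast
  have "S \<subseteq> span (insert x S')"
  proof
    fix y assume y: "y \<in> S"
    have "y - (x \<bullet> y) *\<^sub>R x \<in> S'"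
      unfolding S'_def using y xS S nx
      by (auto simp: subspace_diff subspace_scale inner_diff_right dot_square_norm)
    then have "y - (x \<bullet> y) *\<^sub>R x + (x \<bullet> y) *\<^sub>R x \<in> span (insert x S')"
      by (intro span_add span_scale) (simp_all add: span_base)
    then show "y \<in> span (insert x S')"
      by simp
  qed
  moreover have "span (insert x S') \<subseteq> S"
    using S xS unfolding S'_def by (intro span_minimal) auto
  ultimately have "span (insert x S') = S"
    by blast
  then have "dim S = dim (insert x S')"
    by (metis dim_span)
  then show "dim S = dim S' + 1"
    using xS' dim_insert[of x S'] by simp
qed

lemma symmetric_matrix_orthonormal_eigenvectors_in_invariant_subspace:
  fixes A :: "real^'n^'n"
  assumes sym: "transpose A = A"
  shows "subspace S \<Longrightarrow> \<forall>x\<in>S. A *v x \<in> S \<Longrightarrow>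
    \<exists>B. B \<subseteq> S \<and> finite B \<and> pairwise orthogonal B \<and> card B = dim S \<and>
      (\<forall>x\<in>B. norm x = 1 \<and> (\<exists>\<mu>. A *v x = \<mu> *\<^sub>R x))"
proof (induction "dim S" arbitrary: S rule: less_induct)
  case less
  show ?case
  proof (cases "S = {0}")
    case True
    then show ?thesis
      by (intro exI[of _ "{}"]) auto
  next
    case False
    obtain x \<mu> where xS: "x \<in> S" and nx: "norm x = 1" and ev: "A *v x = \<mu> *\<^sub>R x"
      using symmetric_matrix_eigenvector_in_invariant_subspace[OF sym less.prems False] by blast
    define S' where "S' = {y \<in> S. x \<bullet> y = 0}"
    note dimS = dim_orthogonal_complement_of_unit_vector[OF less.prems(1) xS nx, folded S'_def]
    have "subspace S'"
      using less.prems(1) unfolding S'_def subspace_def by (auto simp: inner_add_right)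
    moreover have "\<forall>y\<in>S'. A *v y \<in> S'"
    proof
      fix y assume y: "y \<in> S'"
      have "x \<bullet> (A *v y) = (A *v x) \<bullet> y"
        using inner_transpose_matrix_vector[of x A y] sym by simp
      then show "A *v y \<in> S'"
        using y ev less.prems(2) unfolding S'_def by auto
    qed
    ultimately obtain B' where B': "B' \<subseteq> S'" "finite B'" "pairwise orthogonal B'" "card B' = dim S'"
      "\<forall>x\<in>B'. norm x = 1 \<and> (\<exists>\<mu>. A *v x = \<mu> *\<^sub>R x)"
      using less.hyps dimS(1) by force
    have "x \<notin> B'"
      using B'(1) dimS(2) span_base by blast
    then show ?thesis
      using B' xS nx ev dimS(1)
      by (intro exI[of _ "insert x B'"])
        (auto simp: pairwise_insert S'_def orthogonal_def inner_commute)
  qed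
qed

lemma symmetric_matrix_orthogonally_diagonalizable:
  fixes A :: "real^'n^'n"
  assumes sym: "transpose A = A"
  shows "\<exists>Q d. orthogonal_matrix Q \<and> A ** Q = Q ** diag_mat d"
proof -
  obtain B where B: "finite B" "pairwise orthogonal B" "card B = CARD('n)"
      "\<forall>x\<in>B. norm x = 1 \<and> (\<exists>\<mu>. A *v x = \<mu> *\<^sub>R x)"
    using symmetric_matrix_orthonormal_eigenvectors_in_invariant_subspace[OF sym, of UNIV] by auto
  then obtain b where b: "bij_betw b (UNIV::'n set) B"
    using bij_betw_iff_card[of "UNIV::'n set" B] by auto
  have bB: "b k \<in> B" for k
    using b by (auto simp: bij_betw_def)
  have "\<forall>k. \<exists>\<mu>. A *v b k = \<mu> *\<^sub>R b k"
    using B(4) bB by blast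
  then obtain d where d: "\<And>k. A *v b k = d k *\<^sub>R b k"
    by metis
  have bb: "b k \<bullet> b l = (if k = l then 1 else 0)" for k l
  proof (cases "k = l")
    case False
    then have "b k \<noteq> b l"
      using b by (auto simp: bij_betw_def inj_on_def)
    then show ?thesis
      using B(2) bB False unfolding pairwise_def orthogonal_def by auto
  qed (use B(4) bB in \<open>simp add: norm_eq_1\<close>)
  define Q where "Q = (\<chi> i k. b k $ i)"
  have "transpose Q ** Q = mat 1"
    using bb by (simp add: Q_def matrix_matrix_mult_def transpose_def mat_def inner_vec_def vec_eq_iff)
  moreover have "(A ** Q) $ i $ l = (Q ** diag_mat d) $ i $ l" for i l
  proof -
    have "(A ** Q) $ i $ l = (A *v b l) $ i"
      by (simp add: Q_def matrix_matrix_mult_def matrix_vector_mult_def)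
    also have "\<dots> = (Q ** diag_mat d) $ i $ l"
      by (simp add: d Q_def diag_mat_def matrix_matrix_mult_def if_distrib if_distribR cong: if_cong)
    finally show ?thesis .
  qed
  ultimately show ?thesis
    by (auto simp: orthogonal_matrix vec_eq_iff)
qed

section \<open>Spectral and nuclear norms\<close>

lemma spec_norm_le:
  assumes "\<And>x. norm (A *v x) \<le> c * norm x"
  shows "spec_norm (A::real^'m^'n) \<le> c"
  unfolding spec_norm_def using assms by (rule onorm_le)

lemma norm_matrix_vector_le_spec_norm: "norm ((A::real^'m^'n) *v x) \<le> spec_norm A * norm x"
  unfolding spec_norm_def by (rule onorm) simp

lemma spec_norm_nonneg: "0 \<le> spec_norm (A::real^'m^'n)"
  unfolding spec_norm_def by (rule onorm_pos_le) simp

lemma spec_norm_le_norm: "spec_norm (A::real^'m^'n) \<le> norm A"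
  by (rule spec_norm_le) (rule norm_matrix_vector_mult_le)

lemma spec_norm_diff_le: "spec_norm ((A::real^'m^'n) - B) \<le> spec_norm A + spec_norm B"
proof (rule spec_norm_le)
  fix x
  have "norm ((A - B) *v x) \<le> norm (A *v x) + norm (B *v x)"
    unfolding matrix_vector_mult_diff_rdistrib by (rule norm_triangle_ineq4)
  also have "\<dots> \<le> (spec_norm A + spec_norm B) * norm x"
    unfolding distrib_right by (intro add_mono norm_matrix_vector_le_spec_norm)
  finally show "norm ((A - B) *v x) \<le> (spec_norm A + spec_norm B) * norm x" .
qed

lemma norm_matrix_mult_le_spec_norm:
  "norm ((B::real^'n^'m) ** (Y::real^'r^'n)) \<le> spec_norm B * norm Y"
proof -
  have column: "(transpose Y ** transpose B) $ k = B *v (transpose Y $ k)" for k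
    by (simp add: vec_eq_iff matrix_matrix_mult_def matrix_vector_mult_def transpose_def mult.commute)
  have rows: "norm Y ^ 2 = (\<Sum>k\<in>UNIV. norm (transpose Y $ k) ^ 2)"
    by (metis norm_matrix_sq norm_transpose)
  have "norm (B ** Y) = norm (transpose Y ** transpose B)"
    by (metis norm_transpose matrix_transpose_mul)
  then have "norm (B ** Y) ^ 2 = (\<Sum>k\<in>UNIV. norm (B *v (transpose Y $ k)) ^ 2)"
    by (simp add: norm_matrix_sq column)
  also have "\<dots> \<le> (\<Sum>k\<in>UNIV. (spec_norm B * norm (transpose Y $ k)) ^ 2)"
    by (intro sum_mono power_mono norm_matrix_vector_le_spec_norm norm_ge_zero)
  also have "\<dots> = (spec_norm B * norm Y) ^ 2"
    by (simp add: power_mult_distrib rows sum_distrib_left)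
  finally show ?thesis
    by (rule power2_le_imp_le) (simp add: spec_norm_nonneg)
qed

lemma nuc_norm_eq_Sup_inner: "nuc_norm A = Sup {(A::real^'m^'n) \<bullet> B | B. spec_norm B \<le> 1}"
  by (simp add: nuc_norm_def trace_transpose_mult)

lemma bdd_above_inner_spec_norm_ball: "bdd_above {(A::real^'m^'n) \<bullet> B | B. spec_norm B \<le> 1}"
proof (rule bdd_aboveI)
  fix y assume "y \<in> {A \<bullet> B | B. spec_norm B \<le> 1}"
  then obtain B where y: "y = A \<bullet> B" and B: "spec_norm B \<le> 1"
    by blast
  have "A$i$j * B$i$j \<le> \<bar>A$i$j\<bar>" for i j
  proof -
    have "\<bar>B$i$j\<bar> \<le> 1"
      using matrix_component_le_onorm[of B i j] B by (simp add: spec_norm_def)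
    then have "\<bar>A$i$j * B$i$j\<bar> \<le> \<bar>A$i$j\<bar>"
      unfolding abs_mult by (rule mult_left_le) simp
    then show ?thesis
      by linarith
  qed
  then show "y \<le> (\<Sum>i\<in>UNIV. \<Sum>j\<in>UNIV. \<bar>A$i$j\<bar>)"
    unfolding y inner_matrix_eq_sum by (intro sum_mono)
qed

lemma inner_le_nuc_norm: "spec_norm B \<le> 1 \<Longrightarrow> (A::real^'m^'n) \<bullet> B \<le> nuc_norm A"
  unfolding nuc_norm_eq_Sup_inner
  by (rule cSup_upper) (use bdd_above_inner_spec_norm_ball in auto)

lemma nuc_norm_le:
  assumes "\<And>B. spec_norm B \<le> 1 \<Longrightarrow> (A::real^'m^'n) \<bullet> B \<le> c"
  shows "nuc_norm A \<le> c"
proof -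
  have "spec_norm (0::real^'m^'n) \<le> 1"
    by (rule spec_norm_le) simp
  then show ?thesis
    unfolding nuc_norm_eq_Sup_inner using assms by (intro cSup_least) auto
qed

lemma nuc_norm_mult_transpose_le:
  "nuc_norm ((X::real^'r^'n) ** transpose (Y::real^'r^'m)) \<le> norm X * norm Y"
proof (rule nuc_norm_le)
  fix B :: "real^'m^'n"
  assume B: "spec_norm B \<le> 1"
  have "(X ** transpose Y) \<bullet> B = X \<bullet> (B ** Y)"
    by (simp add: inner_matrix_mult_right)
  also have "\<dots> \<le> norm X * norm (B ** Y)"
    by (rule norm_cauchy_schwarz)
  also have "\<dots> \<le> norm X * norm Y"
    using norm_matrix_mult_le_spec_norm[of B Y] mult_right_mono[OF B norm_ge_zero[of Y]]
    by (intro mult_left_mono) simp_all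
  finally show "(X ** transpose Y) \<bullet> B \<le> norm X * norm Y" .
qed

section \<open>The sampling operator and the objectives\<close>

lemma P_Omega_add: "P_Omega \<Omega> (A + B) = P_Omega \<Omega> A + P_Omega \<Omega> B"
  by (simp add: P_Omega_def vec_eq_iff)

lemma P_Omega_diff: "P_Omega \<Omega> (A - B) = P_Omega \<Omega> A - P_Omega \<Omega> B"
  by (simp add: P_Omega_def vec_eq_iff)

lemma P_Omega_scaleR: "P_Omega \<Omega> (c *\<^sub>R A) = c *\<^sub>R P_Omega \<Omega> A"
  by (simp add: P_Omega_def vec_eq_iff)

lemma inner_P_Omega: "P_Omega \<Omega> A \<bullet> B = A \<bullet> P_Omega \<Omega> B"
  by (auto simp: P_Omega_def inner_matrix_eq_sum intro!: sum.cong)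

lemma P_Omega_idem: "P_Omega \<Omega> (P_Omega \<Omega> A) = P_Omega \<Omega> A"
  by (simp add: P_Omega_def vec_eq_iff)

lemma inner_P_Omega_left: "P_Omega \<Omega> A \<bullet> P_Omega \<Omega> B = P_Omega \<Omega> A \<bullet> B"
  by (metis P_Omega_idem inner_P_Omega)

lemma sum_sq_Omega_eq_norm_P_Omega:
  "(\<Sum>(i, j)\<in>\<Omega>. (F $ i $ j)^2) = norm (P_Omega \<Omega> (F::real^'m^'k)) ^ 2"
proof -
  have "norm (P_Omega \<Omega> F) ^ 2 = (\<Sum>i\<in>UNIV. \<Sum>j\<in>UNIV. if (i, j) \<in> \<Omega> then (F$i$j)^2 else 0)"
    unfolding power2_norm_eq_inner
    by (auto simp: inner_matrix_eq_sum P_Omega_def power2_eq_square intro!: sum.cong)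
  also have "\<dots> = (\<Sum>(i, j)\<in>UNIV. if (i, j) \<in> \<Omega> then (F$i$j)^2 else 0)"
    by (simp add: sum.cartesian_product)
  also have "\<dots> = (\<Sum>(i, j)\<in>\<Omega>. (F $ i $ j)^2)"
    by (simp add: sum.inter_restrict[symmetric] case_prod_beta if_distrib cong: if_cong)
  finally show ?thesis ..
qed

lemma frob_sq_eq_norm_sq: "frob_sq A = norm A ^ 2"
  unfolding frob_sq_def power2_norm_eq_inner inner_matrix_eq_sum by (simp add: power2_eq_square)

lemma h_obj_eq: "h_obj \<Omega> M lam (A, B) = 1/2 * norm (P_Omega \<Omega> (A ** transpose B - M)) ^ 2
    + lam/2 * norm A ^ 2 + lam/2 * norm B ^ 2"
  using sum_sq_Omega_eq_norm_P_Omega[where \<Omega>=\<Omega> and F="A ** transpose B - M"]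
  by (simp add: h_obj_def frob_sq_eq_norm_sq)

lemma g_obj_eq: "g_obj \<Omega> M lam Z = 1/2 * norm (P_Omega \<Omega> (Z - M)) ^ 2 + lam * nuc_norm Z"
  using sum_sq_Omega_eq_norm_P_Omega[where \<Omega>=\<Omega> and F="Z - M"] by (simp add: g_obj_def)

section \<open>Critical points of the factored objective\<close>

lemma linear_coeff_eq_0_if_stationary:
  fixes f :: "'a::real_normed_vector \<Rightarrow> real"
  assumes "(f has_derivative (\<lambda>_. 0)) (at x)"
    and "\<And>t. f (x + t *\<^sub>R d) = a + t * b + t^2 * c"
  shows "b = 0"
proof -
  have "((\<lambda>t::real. x + t *\<^sub>R d) has_derivative (\<lambda>t. t *\<^sub>R d)) (at 0)"
    by (auto intro!: derivative_eq_intros)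
  then have "((f \<circ> (\<lambda>t. x + t *\<^sub>R d)) has_derivative (\<lambda>_. 0)) (at 0)"
    using diff_chain_at assms(1) by (fastforce simp: o_def)
  moreover have "(*) (0::real) = (\<lambda>_. 0)"
    by auto
  ultimately have "((\<lambda>t. f (x + t *\<^sub>R d)) has_real_derivative 0) (at 0)"
    by (simp add: has_field_derivative_def o_def)
  moreover have "((\<lambda>t. a + t * b + t^2 * c) has_real_derivative b) (at 0)"
    by (auto intro!: derivative_eq_intros)
  ultimately show ?thesis
    unfolding assms(2) using DERIV_unique by blast
qed

lemma norm_add_scaleR_sq:
  "norm (a + t *\<^sub>R b) ^ 2 = norm a ^ 2 + t * (2 * (a \<bullet> b)) + t^2 * norm b ^ 2"
  for a b :: "'a::real_inner"
  unfolding power2_norm_eq_inner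
  by (simp add: inner_commute algebra_simps power2_eq_square)

text \<open>The side condition \<open>D1 D2\<^sup>T = 0\<close> removes the cross term, so that \<open>h\<close> is quadratic
  along the direction \<open>(D1, D2)\<close>.\<close>

lemma h_obj_first_order_condition:
  fixes X Y D1 D2 :: "real^'r^'n"
  assumes crit: "(h_obj \<Omega> M lam has_derivative (\<lambda>_. 0)) (at (X, Y))"
    and D: "D1 ** transpose D2 = 0"
  defines "G \<equiv> P_Omega \<Omega> (X ** transpose Y - M)"
  shows "G \<bullet> (D1 ** transpose Y + X ** transpose D2) + lam * (X \<bullet> D1 + Y \<bullet> D2) = 0"
proof -
  define K where "K = P_Omega \<Omega> (D1 ** transpose Y + X ** transpose D2)"
  have "P_Omega \<Omega> ((X + t *\<^sub>R D1) ** transpose (Y + t *\<^sub>R D2) - M) = G + t *\<^sub>R K" for t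
    using D by (simp add: G_def K_def matrix_algebra_simps P_Omega_add P_Omega_diff
        P_Omega_scaleR algebra_simps)
  then have "h_obj \<Omega> M lam ((X, Y) + t *\<^sub>R (D1, D2)) =
      (1/2 * norm G ^ 2 + lam/2 * norm X ^ 2 + lam/2 * norm Y ^ 2)
      + t * (G \<bullet> K + lam * (X \<bullet> D1 + Y \<bullet> D2))
      + t^2 * (1/2 * norm K ^ 2 + lam/2 * norm D1 ^ 2 + lam/2 * norm D2 ^ 2)" for t
    by (simp add: h_obj_eq norm_add_scaleR_sq algebra_simps)
  then have "G \<bullet> K + lam * (X \<bullet> D1 + Y \<bullet> D2) = 0"
    by (rule linear_coeff_eq_0_if_stationary[OF crit])
  moreover have "G \<bullet> K = G \<bullet> (D1 ** transpose Y + X ** transpose D2)"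
    by (simp add: G_def K_def inner_P_Omega_left)
  ultimately show ?thesis
    by simp
qed

lemma h_obj_critical_point_equations:
  fixes X Y :: "real^'r^'n"
  assumes crit: "(h_obj \<Omega> M lam has_derivative (\<lambda>_. 0)) (at (X, Y))"
  defines "G \<equiv> P_Omega \<Omega> (X ** transpose Y - M)"
  shows "G ** Y = - lam *\<^sub>R X" and "transpose G ** X = - lam *\<^sub>R Y"
proof -
  have "(G ** Y + lam *\<^sub>R X) \<bullet> D = 0" for D
  proof -
    have "G \<bullet> (D ** transpose Y) = (G ** Y) \<bullet> D"
      by (metis inner_matrix_mult_right)
    then show ?thesis
      using h_obj_first_order_condition[OF crit, of D 0] by (simp add: G_def inner_add_left)
  qed
  then show "G ** Y = - lam *\<^sub>R X"
    by (metis inner_eq_zero_iff add_eq_0_iff2 scaleR_minus_left)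
  have "(transpose G ** X + lam *\<^sub>R Y) \<bullet> D = 0" for D
  proof -
    have "G \<bullet> (X ** transpose D) = X \<bullet> (G ** D)"
      by (metis inner_commute inner_matrix_mult_right transpose_transpose)
    also have "\<dots> = (transpose G ** X) \<bullet> D"
      by (simp add: inner_matrix_mult_left)
    finally show ?thesis
      using h_obj_first_order_condition[OF crit, of 0 D] by (simp add: G_def inner_add_left)
  qed
  then show "transpose G ** X = - lam *\<^sub>R Y"
    by (metis inner_eq_zero_iff add_eq_0_iff2 scaleR_minus_left)
qed

lemma critical_point_balanced:
  fixes X Y :: "real^'r^'n"
  assumes GY: "G ** Y = - lam *\<^sub>R X" and GX: "transpose G ** X = - lam *\<^sub>R Y" and "lam \<noteq> 0"
  shows "transpose X ** X = transpose Y ** Y"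
proof -
  have "- lam *\<^sub>R (transpose X ** X) = transpose X ** (G ** Y)"
    by (simp add: GY matrix_scaleR_right matrix_mult_minus_right)
  also have "\<dots> = transpose (transpose G ** X) ** Y"
    by (simp add: matrix_transpose_mul matrix_mul_assoc)
  also have "\<dots> = - lam *\<^sub>R (transpose Y ** Y)"
    by (simp add: GX transpose_uminus transpose_scalar matrix_scaleR_left matrix_mult_minus_left)
  finally show ?thesis
    using assms(3) by simp
qed

lemma gram_matrix_eigenvalue_pos:
  fixes X :: "real^'r^'n"
  assumes "inj ((*v) X)" and "orthogonal_matrix Q" and "(transpose X ** X) ** Q = Q ** diag_mat d"
  shows "0 < d k"
proof -
  define q where "q = Q *v axis k 1"
  have "norm q = 1"
    using assms(2) orthogonal_matrix_orthonormal_columns[of Q] by (simp add: q_def matrix_vector_mult_basis)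
  then have "q \<noteq> 0"
    by auto
  then have "X *v q \<noteq> 0"
    using assms(1) by (metis matrix_vector_mult_0_right injD)
  have diag_axis: "diag_mat d *v axis k 1 = d k *\<^sub>R axis k 1"
    by (simp add: vec_eq_iff diag_mat_mult_vector_component axis_def)
  have "transpose X *v (X *v q) = Q *v (diag_mat d *v axis k 1)"
    by (simp add: q_def matrix_vector_mul_assoc matrix_mul_assoc assms(3))
  also have "\<dots> = d k *\<^sub>R q"
    using diag_axis by (simp add: q_def matrix_vector_mult_scaleR)
  finally have "(X *v q) \<bullet> (X *v q) = d k * (q \<bullet> q)"
    by (metis inner_scaleR_right inner_transpose_matrix_vector)
  with \<open>q \<noteq> 0\<close> \<open>X *v q \<noteq> 0\<close> show ?thesis
    by (metis inner_gt_zero_iff zero_less_mult_pos2)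
qed

text \<open>Since \<open>X\<^sup>T X = Y\<^sup>T Y\<close>, one orthogonal diagonalisation \<open>Q\<^sup>T (X\<^sup>T X) Q = diag d\<close> of
  the common Gram matrix yields the compact SVD \<open>X Y\<^sup>T = (X R) diag d (Y R)\<^sup>T\<close> with
  \<open>R = Q diag (1 / sqrt d)\<close>.\<close>

lemma balanced_factorization_svd:
  fixes X Y :: "real^'r^'n"
  assumes rank: "rank X = CARD('r)" and bal: "transpose X ** X = transpose Y ** Y"
  shows "\<exists>(R::real^'r^'r) \<sigma>. transpose (X ** R) ** (X ** R) = mat 1 \<and> transpose (Y ** R) ** (Y ** R) = mat 1 \<and>
    (\<forall>k. 0 < \<sigma> k) \<and> X ** transpose Y = (X ** R) ** diag_mat \<sigma> ** transpose (Y ** R)"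
proof -
  obtain Q d where Q: "orthogonal_matrix Q" and AQ: "(transpose X ** X) ** Q = Q ** diag_mat d"
    using symmetric_matrix_orthogonally_diagonalizable[of "transpose X ** X"]
    by (auto simp: matrix_transpose_mul)
  have d: "0 < d k" for k
    using gram_matrix_eigenvalue_pos[OF _ Q AQ] rank full_rank_injective by blast
  define h where "h k = 1 / sqrt (d k)" for k
  have "h k * d k * h k = 1" for k
    using d[of k] by (simp add: h_def abs_of_pos flip: real_sqrt_mult)
  then have hdh: "diag_mat h ** diag_mat d ** diag_mat h = mat 1"
    by (simp add: diag_mat_mult diag_mat_1)
  define R where "R = Q ** diag_mat h"
  have "transpose Q ** (transpose X ** X) ** Q = transpose Q ** (Q ** diag_mat d)"
    by (subst matrix_mul_assoc[symmetric]) (simp only: AQ)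
  also have "\<dots> = diag_mat d"
    using Q by (simp add: matrix_mul_assoc orthogonal_matrix_def)
  finally have QAQ: "transpose Q ** (transpose X ** X) ** Q = diag_mat d" .
  have "transpose (X ** R) ** (X ** R) = diag_mat h ** (transpose Q ** (transpose X ** X) ** Q) ** diag_mat h"
    and "transpose (Y ** R) ** (Y ** R) = diag_mat h ** (transpose Q ** (transpose Y ** Y) ** Q) ** diag_mat h"
    by (simp_all add: R_def matrix_transpose_mul transpose_diag_mat matrix_mul_assoc)
  then have XR: "transpose (X ** R) ** (X ** R) = mat 1" and YR: "transpose (Y ** R) ** (Y ** R) = mat 1"
    by (simp_all only: QAQ QAQ[unfolded bal] hdh)
  have "R ** diag_mat d ** transpose R = Q ** (diag_mat h ** diag_mat d ** diag_mat h) ** transpose Q"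
    by (simp add: R_def matrix_transpose_mul transpose_diag_mat matrix_mul_assoc)
  then have "R ** diag_mat d ** transpose R = mat 1"
    using Q hdh by (simp add: orthogonal_matrix_def)
  moreover have "(X ** R) ** diag_mat d ** transpose (Y ** R)
      = X ** (R ** diag_mat d ** transpose R) ** transpose Y"
    by (simp add: matrix_transpose_mul matrix_mul_assoc)
  ultimately have "X ** transpose Y = (X ** R) ** diag_mat d ** transpose (Y ** R)"
    by simp
  then show ?thesis
    using XR YR d by (intro exI[of _ R] exI[of _ d]) auto
qed

lemma critical_point_svd:
  fixes X Y :: "real^'r^'n"
  assumes crit: "(h_obj \<Omega> M lam has_derivative (\<lambda>_. 0)) (at (X, Y))"
    and rank: "rank X = CARD('r)" and lam: "0 < lam"
  defines "G \<equiv> P_Omega \<Omega> (X ** transpose Y - M)"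
  obtains U V :: "real^'r^'n" and \<sigma> where "transpose U ** U = mat 1" and "transpose V ** V = mat 1"
    and "\<forall>k. 0 < \<sigma> k" and "X ** transpose Y = U ** diag_mat \<sigma> ** transpose V"
    and "G ** V = - lam *\<^sub>R U" and "transpose G ** U = - lam *\<^sub>R V"
proof -
  note GY = h_obj_critical_point_equations(1)[OF crit, folded G_def]
  note GX = h_obj_critical_point_equations(2)[OF crit, folded G_def]
  obtain R :: "real^'r^'r" and \<sigma> where "transpose (X ** R) ** (X ** R) = mat 1"
    and "transpose (Y ** R) ** (Y ** R) = mat 1" and "\<forall>k. 0 < \<sigma> k"
    and "X ** transpose Y = (X ** R) ** diag_mat \<sigma> ** transpose (Y ** R)"
    using balanced_factorization_svd[OF rank critical_point_balanced[OF GY GX]] lam by auto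
  moreover have "G ** (Y ** R) = - lam *\<^sub>R (X ** R)" and "transpose G ** (X ** R) = - lam *\<^sub>R (Y ** R)"
    by (simp_all add: matrix_mul_assoc GY GX matrix_scaleR_left matrix_mult_minus_left)
  ultimately show ?thesis
    using that by blast
qed

section \<open>The gradient away from the column space\<close>

lemma DIM_le_rank_if_inj:
  fixes f :: "'a::euclidean_space \<Rightarrow> real^'n" and A :: "real^'n^'m"
  assumes "linear f" and "inj (\<lambda>z. A *v f z)"
  shows "DIM('a) \<le> rank A"
proof -
  have "linear (\<lambda>z. A *v f z)"
    using linear_compose[OF assms(1) matrix_vector_mul_linear[of A]] by (simp add: o_def)
  then have "DIM('a) = dim (range (\<lambda>z. A *v f z))"
    using assms(2) by (simp add: dim_image_eq inj_on_def)
  also have "\<dots> \<le> dim (range (\<lambda>y. A *v y))"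
    by (rule dim_subset) auto
  finally show ?thesis
    by (simp add: rank_dim_range)
qed

lemma rank_scaleR_le: "rank (c *\<^sub>R (A::real^'n^'m)) \<le> rank A"
proof -
  have "c *\<^sub>R A = (c *\<^sub>R mat 1) ** A"
    by (simp add: matrix_scaleR_left)
  then show ?thesis
    by (metis rank_mul_le_right)
qed

lemma norm_diag_mat_add_scaleR_ge:
  assumes "0 \<le> lam" and "\<forall>k. 0 \<le> \<sigma> k"
  shows "lam * norm c \<le> norm (diag_mat \<sigma> *v c + lam *\<^sub>R c)"
proof -
  have "norm ((lam *\<^sub>R c) $ k) \<le> norm ((diag_mat \<sigma> *v c + lam *\<^sub>R c) $ k)" for k
    using assms
    by (auto simp: diag_mat_mult_vector_component abs_mult intro!: mult_right_mono simp flip: distrib_right)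
  then show ?thesis
    using assms(1) by (metis norm_le_componentwise_cart norm_scaleR abs_of_nonneg)
qed

lemma norm_sq_on_range_plus_complement:
  fixes U V :: "real^'r^'n" and G :: "real^'n^'n"
  assumes UU: "transpose U ** U = mat 1" and VV: "transpose V ** V = mat 1"
    and GV: "G ** V = - lam *\<^sub>R U" and GU: "transpose G ** U = - lam *\<^sub>R V"
    and x: "transpose V *v x = 0"
  shows "norm ((U ** diag_mat \<sigma> ** transpose V - G) *v (V *v c + \<alpha> *\<^sub>R x)) ^ 2
      = norm (diag_mat \<sigma> *v c + lam *\<^sub>R c) ^ 2 + \<alpha>^2 * norm (G *v x) ^ 2"
    and "norm (V *v c + \<alpha> *\<^sub>R x) ^ 2 = norm c ^ 2 + \<alpha>^2 * norm x ^ 2"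
proof -
  define w where "w = diag_mat \<sigma> *v c + lam *\<^sub>R c"
  define s where "s = V *v c + \<alpha> *\<^sub>R x"
  have Vs: "transpose V *v s = c"
    using VV x by (simp add: s_def matrix_vector_right_distrib matrix_vector_mult_scaleR matrix_vector_mul_assoc)
  have Gs: "G *v s = - lam *\<^sub>R (U *v c) + \<alpha> *\<^sub>R (G *v x)"
    using GV by (simp add: s_def matrix_vector_right_distrib matrix_vector_mult_scaleR matrix_vector_mul_assoc
        scaleR_matrix_vector_assoc)
  have "(U ** diag_mat \<sigma> ** transpose V - G) *v s = U *v (diag_mat \<sigma> *v (transpose V *v s)) - G *v s"
    by (simp add: matrix_vector_mult_diff_rdistrib matrix_vector_mul_assoc matrix_mul_assoc)
  also have "\<dots> = U *v w + (- \<alpha>) *\<^sub>R (G *v x)"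
    by (simp add: Vs Gs w_def matrix_vector_right_distrib matrix_vector_mult_scaleR)
  finally have Ns: "(U ** diag_mat \<sigma> ** transpose V - G) *v s = U *v w + (- \<alpha>) *\<^sub>R (G *v x)" .
  moreover have "orthogonal (U *v w) ((- \<alpha>) *\<^sub>R (G *v x))"
  proof -
    have "(U *v w) \<bullet> (G *v x) = w \<bullet> ((transpose U ** G) *v x)"
      by (simp flip: inner_transpose_matrix_vector matrix_vector_mul_assoc)
    also have "(transpose U ** G) *v x = 0"
      using x by (simp add: transpose_mult_flip[OF GU] matrix_vector_mult_minus_left
          flip: scaleR_matrix_vector_assoc)
    finally show ?thesis
      by (simp add: orthogonal_def)
  qed
  then have "norm (U *v w + (- \<alpha>) *\<^sub>R (G *v x)) ^ 2 = norm (U *v w) ^ 2 + norm ((- \<alpha>) *\<^sub>R (G *v x)) ^ 2"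
    by (rule norm_add_Pythagorean)
  then show "norm ((U ** diag_mat \<sigma> ** transpose V - G) *v (V *v c + \<alpha> *\<^sub>R x)) ^ 2
      = norm w ^ 2 + \<alpha>^2 * norm (G *v x) ^ 2"
    unfolding Ns[unfolded s_def] by (simp add: norm_orthonormal_columns[OF UU] power_mult_distrib)
  have "orthogonal (V *v c) (\<alpha> *\<^sub>R x)"
    using x by (simp add: orthogonal_def flip: inner_transpose_matrix_vector)
  then show "norm (V *v c + \<alpha> *\<^sub>R x) ^ 2 = norm c ^ 2 + \<alpha>^2 * norm x ^ 2"
    by (simp add: norm_add_Pythagorean norm_orthonormal_columns[OF VV] power_mult_distrib)
qed

lemma norm_low_rank_minus_gradient_gt:
  fixes U V :: "real^'r^'n" and G :: "real^'n^'n"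
  assumes UU: "transpose U ** U = mat 1" and VV: "transpose V ** V = mat 1"
    and \<sigma>: "\<forall>k. 0 \<le> \<sigma> k"
    and GV: "G ** V = - lam *\<^sub>R U" and GU: "transpose G ** U = - lam *\<^sub>R V"
    and q: "0 \<le> q" "q < lam" and x: "transpose V *v x = 0" and Gx: "q * norm x < norm (G *v x)"
    and nz: "(c, \<alpha>) \<noteq> 0"
  shows "q * norm (V *v c + \<alpha> *\<^sub>R x) < norm ((U ** diag_mat \<sigma> ** transpose V - G) *v (V *v c + \<alpha> *\<^sub>R x))"
proof -
  note split = norm_sq_on_range_plus_complement[OF UU VV GV GU x]
  have "lam * norm c \<le> norm (diag_mat \<sigma> *v c + lam *\<^sub>R c)"
    using q \<sigma> by (intro norm_diag_mat_add_scaleR_ge) auto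
  then have c: "(lam * norm c)^2 \<le> norm (diag_mat \<sigma> *v c + lam *\<^sub>R c) ^ 2"
    using q by (intro power_mono) auto
  have "(q * norm (V *v c + \<alpha> *\<^sub>R x))^2 = (q * norm c)^2 + \<alpha>^2 * (q * norm x)^2"
    using split(2) by (simp add: power_mult_distrib algebra_simps)
  also have "\<dots> < (lam * norm c)^2 + \<alpha>^2 * norm (G *v x)^2"
  proof (cases "c = 0")
    case True
    then have "\<alpha> \<noteq> 0"
      using nz by (auto simp: zero_prod_def)
    then show ?thesis
      using True Gx q by (simp add: power_strict_mono)
  next
    case False
    then have "(q * norm c)^2 < (lam * norm c)^2"
      using q by (intro power_strict_mono) auto
    moreover have "(q * norm x)^2 \<le> norm (G *v x)^2"
      using Gx q by (intro power_mono) auto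
    ultimately show ?thesis
      by (intro add_less_le_mono mult_left_mono) auto
  qed
  also have "\<dots> \<le> norm ((U ** diag_mat \<sigma> ** transpose V - G) *v (V *v c + \<alpha> *\<^sub>R x)) ^ 2"
    using c split(1) by simp
  finally show ?thesis
    by (rule power2_less_imp_less) simp
qed

text \<open>If \<open>G\<close> were large on some \<open>x \<perp> range V\<close>, then \<open>U diag \<sigma> V\<^sup>T - G - Q\<close> would be
  injective on the \<open>(r + 1)\<close>-dimensional space \<open>range V + span {x}\<close>, contradicting its rank.\<close>

lemma norm_gradient_off_range_le_spec_norm:
  fixes U V :: "real^'r^'n" and G Q :: "real^'n^'n"
  assumes UU: "transpose U ** U = mat 1" and VV: "transpose V ** V = mat 1"
    and \<sigma>: "\<forall>k. 0 \<le> \<sigma> k"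
    and GV: "G ** V = - lam *\<^sub>R U" and GU: "transpose G ** U = - lam *\<^sub>R V"
    and Q: "spec_norm Q < lam"
    and rank: "rank (U ** diag_mat \<sigma> ** transpose V - G - Q) \<le> CARD('r)"
    and x: "transpose V *v x = 0"
  shows "norm (G *v x) \<le> spec_norm Q * norm x"
proof (rule ccontr)
  define N where "N = U ** diag_mat \<sigma> ** transpose V - G"
  define L where "L z = V *v fst z + snd z *\<^sub>R x" for z :: "(real^'r) \<times> real"
  assume "\<not> norm (G *v x) \<le> spec_norm Q * norm x"
  then have N_large: "spec_norm Q * norm (L z) < norm (N *v L z)" if "z \<noteq> 0" for z
    using norm_low_rank_minus_gradient_gt[OF UU VV \<sigma> GV GU spec_norm_nonneg Q x, of "fst z" "snd z"] that
    by (simp add: L_def N_def)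
  have "z = 0" if "(N - Q) *v L z = 0" for z
  proof (rule ccontr)
    assume "z \<noteq> 0"
    moreover have "N *v L z = Q *v L z"
      using that by (simp add: matrix_vector_mult_diff_rdistrib)
    ultimately show False
      using N_large norm_matrix_vector_le_spec_norm[of Q "L z"] by fastforce
  qed
  moreover have "linear L"
    unfolding L_def by (intro linearI) (auto simp: matrix_vector_right_distrib algebra_simps)
  moreover have "linear (\<lambda>z. (N - Q) *v L z)"
    using linear_compose[OF \<open>linear L\<close> matrix_vector_mul_linear[of "N - Q"]] by (simp add: o_def)
  ultimately have "DIM((real^'r) \<times> real) \<le> rank (N - Q)"
    using DIM_le_rank_if_inj linear_inj_iff_eq_0 by blast
  then show False
    using rank by (simp add: N_def)
qed

text \<open>The noise assumptions give \<open>p Mstar = U diag (p \<sigma>) V\<^sup>T - G - Q\<close> with \<open>\<parallel>Q\<parallel> < lam/4\<close>.\<close>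

lemma norm_gradient_off_range_le:
  fixes U V :: "real^'r^'n" and Mstar E :: "real^'n^'n"
  assumes UU: "transpose U ** U = mat 1" and VV: "transpose V ** V = mat 1" and \<sigma>: "\<forall>k. 0 < \<sigma> k"
    and Z0: "Z0 = U ** diag_mat \<sigma> ** transpose V"
    and GV: "G ** V = - lam *\<^sub>R U" and GU: "transpose G ** U = - lam *\<^sub>R V"
    and G: "G = P_Omega \<Omega> (Z0 - (Mstar + E))" and p: "0 < p" and rank: "rank Mstar = CARD('r)"
    and a: "spec_norm (P_Omega \<Omega> E) < lam / 8"
    and b: "spec_norm (P_Omega \<Omega> (Z0 - Mstar) - p *\<^sub>R (Z0 - Mstar)) < lam / 8"
    and x: "transpose V *v x = 0"
  shows "norm (G *v x) \<le> lam / 4 * norm x"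
proof -
  define K where "K = P_Omega \<Omega> (Z0 - Mstar) - p *\<^sub>R (Z0 - Mstar)"
  define Q where "Q = P_Omega \<Omega> E - K"
  have Q: "spec_norm Q < lam / 4"
    using spec_norm_diff_le[of "P_Omega \<Omega> E" K] a b unfolding Q_def K_def by linarith
  have "U ** diag_mat (\<lambda>k. p * \<sigma> k) ** transpose V - G - Q = p *\<^sub>R Mstar"
    by (simp add: diag_mat_scaleR matrix_scaleR_left matrix_scaleR_right Q_def K_def G P_Omega_add
        P_Omega_diff algebra_simps flip: Z0)
  then have "rank (U ** diag_mat (\<lambda>k. p * \<sigma> k) ** transpose V - G - Q) \<le> CARD('r)"
    by (metis rank_scaleR_le rank)
  moreover have "\<forall>k. 0 \<le> p * \<sigma> k"
    using p \<sigma> by (simp add: less_imp_le)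
  ultimately have "norm (G *v x) \<le> spec_norm Q * norm x"
    using Q spec_norm_nonneg[of Q]
    by (intro norm_gradient_off_range_le_spec_norm[OF UU VV _ GV GU _ _ x]) auto
  also have "\<dots> \<le> lam / 4 * norm x"
    using Q by (intro mult_right_mono) auto
  finally show ?thesis .
qed

section \<open>The dual certificate\<close>

lemma spec_norm_le_1_if_contraction_off_range:
  fixes U V :: "real^'r^'n" and B :: "real^'n^'n"
  assumes UU: "transpose U ** U = mat 1" and VV: "transpose V ** V = mat 1"
    and BV: "B ** V = U" and UB: "transpose U ** B = transpose V"
    and B_perp: "\<And>s. transpose V *v s = 0 \<Longrightarrow> norm (B *v s) \<le> norm s"
  shows "spec_norm B \<le> 1"
proof -
  have "norm (B *v s) \<le> norm s" for s
  proof -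
    define c where "c = transpose V *v s"
    define s' where "s' = s - V *v c"
    have Vs': "transpose V *v s' = 0"
      using VV by (simp add: s'_def c_def matrix_vector_mult_diff_distrib matrix_vector_mul_assoc
          matrix_mul_assoc)
    then have "orthogonal (U *v c) (B *v s')" and "orthogonal (V *v c) s'"
      using UB by (simp_all add: orthogonal_def matrix_vector_mul_assoc flip: inner_transpose_matrix_vector)
    moreover have "B *v s = U *v c + B *v s'" and "s = V *v c + s'"
      by (simp_all add: s'_def matrix_vector_mult_diff_distrib matrix_vector_mul_assoc BV)
    ultimately have "norm (B *v s) ^ 2 = norm c ^ 2 + norm (B *v s') ^ 2"
      and "norm s ^ 2 = norm c ^ 2 + norm s' ^ 2"
      by (metis norm_add_Pythagorean norm_orthonormal_columns[OF UU] norm_orthonormal_columns[OF VV])+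
    then have "norm (B *v s) ^ 2 \<le> norm s ^ 2"
      using B_perp[OF Vs'] by (simp add: power_mono)
    then show ?thesis
      by (rule power2_le_imp_le) simp
  qed
  then show ?thesis
    using spec_norm_le[of B 1] by simp
qed

lemma spec_norm_dual_certificate_le_1:
  fixes U V :: "real^'r^'n" and G D :: "real^'n^'n"
  assumes UU: "transpose U ** U = mat 1" and VV: "transpose V ** V = mat 1"
    and GV: "G ** V = - lam *\<^sub>R U" and GU: "transpose G ** U = - lam *\<^sub>R V" and lam: "0 < lam"
    and G: "\<And>x. transpose V *v x = 0 \<Longrightarrow> norm (G *v x) \<le> lam * c * norm x"
    and DU: "transpose U ** D = 0" and DV: "D ** V = 0" and D: "spec_norm D \<le> 1 - c"
  shows "spec_norm (D - (1 / lam) *\<^sub>R G) \<le> 1"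
proof (rule spec_norm_le_1_if_contraction_off_range[OF UU VV])
  show "(D - (1 / lam) *\<^sub>R G) ** V = U"
    using lam by (simp add: matrix_diff_rdistrib matrix_scaleR_left GV DV)
  show "transpose U ** (D - (1 / lam) *\<^sub>R G) = transpose V"
    using lam by (simp add: matrix_diff_ldistrib matrix_scaleR_right transpose_mult_flip[OF GU] DU)
  fix s assume s: "transpose V *v s = 0"
  have "(D - (1 / lam) *\<^sub>R G) *v s = D *v s - (1 / lam) *\<^sub>R (G *v s)"
    by (simp add: matrix_vector_mult_diff_rdistrib scaleR_matrix_vector_assoc)
  then have "norm ((D - (1 / lam) *\<^sub>R G) *v s) \<le> norm (D *v s) + norm ((1 / lam) *\<^sub>R (G *v s))"
    by (metis norm_triangle_ineq4)
  also have "\<dots> = norm (D *v s) + (1 / lam) * norm (G *v s)"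
    using lam by simp
  also have "\<dots> \<le> (1 - c) * norm s + (1 / lam) * (lam * c * norm s)"
    using lam G[OF s] norm_matrix_vector_le_spec_norm[of D s] mult_right_mono[OF D norm_ge_zero[of s]]
    by (intro add_mono mult_left_mono) auto
  finally show "norm ((D - (1 / lam) *\<^sub>R G) *v s) \<le> norm s"
    using lam by (simp add: algebra_simps)
qed

lemma nuc_norm_critical_point_le:
  fixes X Y :: "real^'r^'n"
  assumes GY: "G ** Y = - lam *\<^sub>R X" and GX: "transpose G ** X = - lam *\<^sub>R Y" and lam: "0 < lam"
  shows "lam * nuc_norm (X ** transpose Y) \<le> - ((X ** transpose Y) \<bullet> G)"
proof -
  have "(X ** transpose Y) \<bullet> G = X \<bullet> (G ** Y)"
    by (simp add: inner_matrix_mult_right)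
  then have XG: "(X ** transpose Y) \<bullet> G = - lam * norm X ^ 2"
    by (simp add: GY power2_norm_eq_inner)
  have "(X ** transpose Y) \<bullet> G = Y \<bullet> (transpose G ** X)"
    by (metis inner_commute inner_matrix_mult_left inner_matrix_mult_right transpose_transpose)
  then have "(X ** transpose Y) \<bullet> G = - lam * norm Y ^ 2"
    by (simp add: GX power2_norm_eq_inner)
  with XG lam have "norm Y = norm X"
    by (simp add: power2_eq_iff_nonneg)
  then show ?thesis
    using XG lam nuc_norm_mult_transpose_le[of X Y] by (simp add: power2_eq_square)
qed

lemma g_obj_subgradient_ineq:
  assumes lam: "0 < lam" and G: "G = P_Omega \<Omega> (Z0 - M)"
    and nuc: "lam * nuc_norm Z0 \<le> - (Z0 \<bullet> G)" and cert: "spec_norm (D - (1 / lam) *\<^sub>R G) \<le> 1"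
  shows "g_obj \<Omega> M lam Z0 + 1/2 * norm (P_Omega \<Omega> (Z - Z0)) ^ 2 + lam * (Z \<bullet> D) \<le> g_obj \<Omega> M lam Z"
proof -
  define H where "H = Z - Z0"
  have "P_Omega \<Omega> (Z - M) = G + P_Omega \<Omega> H"
    by (simp add: G H_def flip: P_Omega_add)
  moreover have "G \<bullet> P_Omega \<Omega> H = G \<bullet> H"
    by (simp add: G inner_P_Omega_left)
  ultimately have fit: "norm (P_Omega \<Omega> (Z - M)) ^ 2 = norm G ^ 2 + 2 * (G \<bullet> H) + norm (P_Omega \<Omega> H) ^ 2"
    by (simp add: power2_norm_eq_inner inner_add_left inner_add_right inner_commute)
  have "lam * (Z \<bullet> (D - (1 / lam) *\<^sub>R G)) \<le> lam * nuc_norm Z"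
    using inner_le_nuc_norm[OF cert] lam by simp
  then have "lam * (Z \<bullet> D) - Z0 \<bullet> G - H \<bullet> G \<le> lam * nuc_norm Z"
    using lam by (simp add: H_def inner_diff_left inner_diff_right algebra_simps)
  then show ?thesis
    using nuc fit by (simp add: g_obj_eq G H_def inner_commute algebra_simps)
qed

definition tangent_perp_proj :: "real^'r^'n \<Rightarrow> real^'r^'n \<Rightarrow> real^'n^'n \<Rightarrow> real^'n^'n" where
  "tangent_perp_proj U V H = (mat 1 - U ** transpose U) ** H ** (mat 1 - V ** transpose V)"

lemma tangent_perp_proj_decomp:
  "H = U ** transpose (transpose H ** U) + ((mat 1 - U ** transpose U) ** H ** V) ** transpose V
    + tangent_perp_proj U V H"
  by (simp add: tangent_perp_proj_def matrix_algebra_simps matrix_mul_assoc)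

lemma tangent_perp_proj_orthogonal:
  assumes "transpose U ** U = mat 1" and "transpose V ** V = mat 1"
  shows "transpose U ** tangent_perp_proj U V H = 0" and "tangent_perp_proj U V H ** V = 0"
proof -
  have "transpose U ** (mat 1 - U ** transpose U) = 0" and "(mat 1 - V ** transpose V) ** V = 0"
    using assms by (simp_all add: matrix_diff_ldistrib matrix_diff_rdistrib matrix_mul_assoc)
      (simp add: flip: matrix_mul_assoc)
  then show "transpose U ** tangent_perp_proj U V H = 0" and "tangent_perp_proj U V H ** V = 0"
    by (simp_all add: tangent_perp_proj_def matrix_mul_assoc) (simp add: flip: matrix_mul_assoc)
qed

lemma inner_tangent_perp_proj:
  assumes UU: "transpose U ** U = mat 1" and VV: "transpose V ** V = mat 1"
  shows "H \<bullet> tangent_perp_proj U V H = norm (tangent_perp_proj U V H) ^ 2"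
proof -
  define P where "P = tangent_perp_proj U V H"
  have "(U ** transpose (transpose H ** U)) \<bullet> P = 0"
    using tangent_perp_proj_orthogonal(1)[OF UU VV] by (simp add: P_def inner_matrix_mult_left)
  moreover have "(((mat 1 - U ** transpose U) ** H ** V) ** transpose V) \<bullet> P = 0"
    using tangent_perp_proj_orthogonal(2)[OF UU VV] by (simp add: P_def inner_matrix_mult_right)
  ultimately have "H \<bullet> P = P \<bullet> P"
    by (subst tangent_perp_proj_decomp[of H U V]) (simp add: P_def inner_add_left)
  then show ?thesis
    by (simp add: P_def power2_norm_eq_inner)
qed

lemma mem_tangent_space_if_tangent_perp_proj_eq_0:
  fixes U V :: "real^'r^'n"
  assumes "transpose U ** U = mat 1" and "transpose V ** V = mat 1" and "\<forall>k. 0 < \<sigma> k"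
    and "tangent_perp_proj U V H = 0"
  shows "H \<in> tangent_space TYPE('r) (U ** diag_mat \<sigma> ** transpose V)"
proof -
  have "H = U ** transpose (transpose H ** U) + ((mat 1 - U ** transpose U) ** H ** V) ** transpose V"
    by (subst (1) tangent_perp_proj_decomp[of H U V]) (simp add: assms(4))
  moreover have "\<forall>i j. i \<noteq> j \<longrightarrow> diag_mat \<sigma> $ i $ j = 0" and "\<forall>i. 0 < diag_mat \<sigma> $ i $ i"
    using assms(3) by (simp_all add: diag_mat_def)
  ultimately show ?thesis
    unfolding tangent_space_def mem_Collect_eq using assms(1,2) by blast
qed

text \<open>The certificate is \<open>D - G/lam\<close>, where \<open>D\<close> is the projection of \<open>Z - Z0\<close> onto the
  orthogonal complement of the tangent space, rescaled to Frobenius norm \<open>3/4\<close> (and \<open>D = 0\<close> if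
  that projection vanishes, since \<open>x / 0 = 0\<close>); \<open>3/4\<close> is the room left by
  \<open>\<parallel>G x\<parallel> \<le> lam/4 \<parallel>x\<parallel>\<close> off \<open>range V\<close>.\<close>

lemma unique_minimizer_of_dual_certificate:
  fixes U V :: "real^'r^'n"
  assumes lam: "0 < lam" and G: "G = P_Omega \<Omega> (Z0 - M)"
    and nuc: "lam * nuc_norm Z0 \<le> - (Z0 \<bullet> G)"
    and UU: "transpose U ** U = mat 1" and VV: "transpose V ** V = mat 1" and \<sigma>: "\<forall>k. 0 < \<sigma> k"
    and Z0: "Z0 = U ** diag_mat \<sigma> ** transpose V"
    and GV: "G ** V = - lam *\<^sub>R U" and GU: "transpose G ** U = - lam *\<^sub>R V"
    and G_perp: "\<And>x. transpose V *v x = 0 \<Longrightarrow> norm (G *v x) \<le> lam / 4 * norm x"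
    and inj: "\<forall>H \<in> tangent_space TYPE('r) Z0. P_Omega \<Omega> H = 0 \<longrightarrow> H = 0"
    and "Z \<noteq> Z0"
  shows "g_obj \<Omega> M lam Z0 < g_obj \<Omega> M lam Z"
proof -
  define H where "H = Z - Z0"
  define P where "P = tangent_perp_proj U V H"
  define D where "D = (3/4 / norm P) *\<^sub>R P"
  have DU: "transpose U ** D = 0" and DV: "D ** V = 0"
    using tangent_perp_proj_orthogonal[OF UU VV]
    by (simp_all add: D_def P_def matrix_scaleR_left matrix_scaleR_right)
  have "spec_norm D \<le> 1 - 1/4"
    using spec_norm_le_norm[of D] by (cases "P = 0") (simp_all add: D_def)
  then have "spec_norm (D - (1 / lam) *\<^sub>R G) \<le> 1"
    using G_perp by (intro spec_norm_dual_certificate_le_1[OF UU VV GV GU lam _ DU DV, of "1/4"]) auto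
  then have ineq: "g_obj \<Omega> M lam Z0 + 1/2 * norm (P_Omega \<Omega> H) ^ 2 + lam * (Z \<bullet> D) \<le> g_obj \<Omega> M lam Z"
    unfolding H_def by (rule g_obj_subgradient_ineq[OF lam G nuc])
  have "Z0 = U ** (diag_mat \<sigma> ** transpose V)"
    by (simp add: Z0 matrix_mul_assoc)
  then have "Z0 \<bullet> D = 0"
    by (simp add: inner_matrix_mult_left DU)
  then have "lam * (Z \<bullet> D) = lam * (3/4 * norm P)"
    using inner_tangent_perp_proj[OF UU VV, of H]
    by (cases "P = 0") (simp_all add: H_def D_def P_def inner_diff_left power2_eq_square)
  moreover have "P = 0 \<Longrightarrow> P_Omega \<Omega> H \<noteq> 0"
    using mem_tangent_space_if_tangent_perp_proj_eq_0[OF UU VV \<sigma>, of H] inj \<open>Z \<noteq> Z0\<close>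
    by (auto simp: Z0 P_def H_def)
  then have "0 < 1/2 * norm (P_Omega \<Omega> H) ^ 2 + lam * (3/4 * norm P)"
    using lam by (cases "P = 0") (simp_all add: add_nonneg_pos)
  ultimately show ?thesis
    using ineq by linarith
qed

theorem lemma1:
  fixes Mstar E :: "real^'n^'n"
    and X Y :: "real^'r^'n"
    and \<Omega> :: "('n \<times> 'n) set"
    and p lam :: real
  assumes rank_Mstar: "rank Mstar = CARD('r)"
    and p_pos: "0 < p" and p_le: "p \<le> 1"
    and lam_pos: "0 < lam"
    and crit: "(h_obj \<Omega> (Mstar + E) lam has_derivative (\<lambda>_. 0)) (at (X, Y))"
    and rank_X: "rank X = CARD('r)" and rank_Y: "rank Y = CARD('r)"
    and inj: "\<forall>H \<in> tangent_space TYPE('r) (X ** transpose Y). P_Omega \<Omega> H = 0 \<longrightarrow> H = 0"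
    and a: "spec_norm (P_Omega \<Omega> E) < lam / 8"
    and b: "spec_norm (P_Omega \<Omega> (X ** transpose Y - Mstar) - p *\<^sub>R (X ** transpose Y - Mstar)) < lam / 8"
  shows "\<forall>Z. Z \<noteq> X ** transpose Y \<longrightarrow>
           g_obj \<Omega> (Mstar + E) lam (X ** transpose Y) < g_obj \<Omega> (Mstar + E) lam Z"
proof (intro allI impI)
  fix Z assume "Z \<noteq> X ** transpose Y"
  define G where "G = P_Omega \<Omega> (X ** transpose Y - (Mstar + E))"
  note GY = h_obj_critical_point_equations(1)[OF crit, folded G_def]
  note GX = h_obj_critical_point_equations(2)[OF crit, folded G_def]
  obtain U V :: "real^'r^'n" and \<sigma> where UU: "transpose U ** U = mat 1" and VV: "transpose V ** V = mat 1"
    and \<sigma>: "\<forall>k. 0 < \<sigma> k" and svd: "X ** transpose Y = U ** diag_mat \<sigma> ** transpose V"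
    and GV: "G ** V = - lam *\<^sub>R U" and GU: "transpose G ** U = - lam *\<^sub>R V"
    using critical_point_svd[OF crit rank_X lam_pos, folded G_def] by blast
  have "norm (G *v x) \<le> lam / 4 * norm x" if "transpose V *v x = 0" for x
    using norm_gradient_off_range_le[OF UU VV \<sigma> svd GV GU G_def p_pos rank_Mstar a b that] .
  then show "g_obj \<Omega> (Mstar + E) lam (X ** transpose Y) < g_obj \<Omega> (Mstar + E) lam Z"
    using unique_minimizer_of_dual_certificate[OF lam_pos G_def nuc_norm_critical_point_le[OF GY GX lam_pos]
        UU VV \<sigma> svd GV GU] inj \<open>Z \<noteq> X ** transpose Y\<close>
    by blast
qed

end
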